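(* Let $m$ be a positive integer, $n=2^m$, and let $v\in\{\pm1\}^n$ have at most $\ell$ sign changes. Then $$\sum_{i\in\mathcal{T}}\ \sum_{j=0}^{2^i-1}2^{-(m-i)/2}\,\big|\langle\psi_{i,j},v\rangle\big|\le \ell\log_2 n+1,$$ where $\mathcal{T}=\{0_{\mathrm{father}},0_{\mathrm{mother}},1,\dots,m-1\}$ and the indices $0_{\mathrm{father}},0_{\mathrm{mother}}$ are given the numerical value $0$ in the summation range and in the weight $2^{-(m-i)/2}$.
   Context: A vector $v\in\{\pm1\}^n$ has at most $\ell$ sign changes if there are at most $\ell$ indices $i\in[n-1]$ with $v_{i+1}\ne v_i$. The Haar wavelet basis of $\mathbb{R}^n$ ($n=2^m$) is the orthonormal basis consisting of the father wavelet $\psi_{0_{\mathrm{father}},0}=n^{-1/2}(1,\dots,1)$, the mother wavelet $\psi_{0_{\mathrm{mother}},0}=n^{-1/2}(1,\dots,1,-1,\dots,-1)$ (with $n/2$ entries $1$ followed by $n/2$ entries $-1$), and, for every $1\le i<m$ and $0\le j<2^i$, the wavelet $\psi_{i,j}$ whose coordinates $2^{m-i}j+1,\dots,2^{m-i}j+2^{m-i-1}$ equal $2^{-(m-i)/2}$, whose coordinates $2^{m-i}j+2^{m-i-1}+1,\dots,2^{m-i}j+2^{m-i}$ equal $-2^{-(m-i)/2}$, and whose other coordinates are $0$. *)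

theory Defs
  imports Complex_Main
begin

text \<open>Vectors in R^n (n = 2^m) are represented as functions nat => real,
  coordinate k (1-based in the paper) corresponding to index k-1 here,
  so only indices 0..n-1 matter.\<close>

definition pm_one_vec :: "nat \<Rightarrow> (nat \<Rightarrow> real) \<Rightarrow> bool" where
  "pm_one_vec n v \<longleftrightarrow> (\<forall>k<n. v k = 1 \<or> v k = -1)"

definition sign_changes :: "nat \<Rightarrow> (nat \<Rightarrow> real) \<Rightarrow> nat" where
  "sign_changes n v = card {i. i + 1 < n \<and> v (i + 1) \<noteq> v i}"

definition inner_n :: "nat \<Rightarrow> (nat \<Rightarrow> real) \<Rightarrow> (nat \<Rightarrow> real) \<Rightarrow> real" where
  "inner_n n u v = (\<Sum>k<n. u k * v k)"

definition haar_father :: "nat \<Rightarrow> nat \<Rightarrow> real" where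
  "haar_father m k = (if k < 2^m then (2::real) powr (- real m / 2) else 0)"

definition haar_mother :: "nat \<Rightarrow> nat \<Rightarrow> real" where
  "haar_mother m k =
     (if k < 2^m div 2 then (2::real) powr (- real m / 2)
      else if k < 2^m then - ((2::real) powr (- real m / 2)) else 0)"

definition haar_psi :: "nat \<Rightarrow> nat \<Rightarrow> nat \<Rightarrow> nat \<Rightarrow> real" where
  "haar_psi m i j k =
     (if 2^(m-i) * j \<le> k \<and> k < 2^(m-i) * j + 2^(m-i-1)
        then (2::real) powr (- real (m - i) / 2)
      else if 2^(m-i) * j + 2^(m-i-1) \<le> k \<and> k < 2^(m-i) * j + 2^(m-i)
        then - ((2::real) powr (- real (m - i) / 2))
      else 0)"

end

theory Submission imports Defs begin

text \<open>Multiplied by its weight, the Haar coefficient of \<open>v\<close> at \<open>\<psi>\<^sub>i\<^sub>,\<^sub>j\<close> is the difference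
  of the sums of \<open>v\<close> over the two halves of the dyadic block of length \<open>s = 2^(m-i)\<close> supporting
  \<open>\<psi>\<^sub>i\<^sub>,\<^sub>j\<close>, divided by \<open>s\<close>. For \<open>|v| \<le> 1\<close> this is at most \<open>1\<close>, and it vanishes when \<open>v\<close> is
  constant on the block. The blocks of one level are disjoint, so at most \<open>\<ell>\<close> of them contain a
  sign change, and each of the \<open>m = log\<^sub>2 n\<close> levels (the mother wavelet being level \<open>0\<close>)
  contributes at most \<open>\<ell>\<close>; the father coefficient, the rescaled mean of \<open>v\<close>, contributes at
  most \<open>1\<close>.\<close>

lemma abs_sum_le_card:
  fixes f :: "'a \<Rightarrow> real"
  assumes "\<And>k. k \<in> A \<Longrightarrow> \<bar>f k\<bar> \<le> 1"
  shows "\<bar>sum f A\<bar> \<le> real (card A)"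
  using order_trans[OF sum_abs sum_bounded_above[of A "\<lambda>k. \<bar>f k\<bar>" 1]] assms by simp

lemma pm_one_vec_abs_le_one: "pm_one_vec n v \<Longrightarrow> k < n \<Longrightarrow> \<bar>v k\<bar> \<le> 1"
  unfolding pm_one_vec_def by force

lemma powr_neg_half_times_self: "(2::real) powr (- real d / 2) * 2 powr (- real d / 2) = 1 / 2 ^ d"
proof -
  have "(2::real) powr (- real d / 2) * 2 powr (- real d / 2) = 2 powr (- real d)"
    by (simp add: powr_add[symmetric])
  also have "\<dots> = 1 / 2 ^ d"
    by (simp add: powr_minus divide_inverse powr_realpow)
  finally show ?thesis .
qed

lemma constant_without_sign_change:
  fixes v :: "nat \<Rightarrow> 'a"
  assumes "\<And>k. a \<le> k \<Longrightarrow> k + 1 < b \<Longrightarrow> v (k + 1) = v k" and "k \<in> {a..<b}"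
  shows "v k = v a"
proof -
  have "a + t < b \<Longrightarrow> v (a + t) = v a" for t
    by (induction t) (use assms(1)[of "a + _"] in auto)
  then show ?thesis
    using assms(2) by (metis atLeastLessThan_iff le_add_diff_inverse)
qed

definition half_block_diff :: "(nat \<Rightarrow> real) \<Rightarrow> nat \<Rightarrow> nat \<Rightarrow> real" where
  "half_block_diff v a h = (\<Sum>k\<in>{a..<a + h}. v k) - (\<Sum>k\<in>{a + h..<a + 2 * h}. v k)"

lemma abs_half_block_diff_le:
  assumes "\<And>k. k \<in> {a..<a + 2 * h} \<Longrightarrow> \<bar>v k\<bar> \<le> 1"
  shows "\<bar>half_block_diff v a h\<bar> \<le> 2 * real h"
proof -
  have "\<bar>\<Sum>k\<in>{a..<a + h}. v k\<bar> \<le> real h" "\<bar>\<Sum>k\<in>{a + h..<a + 2 * h}. v k\<bar> \<le> real h"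
    by (rule abs_sum_le_card[THEN order_trans]; use assms in auto)+
  then show ?thesis
    unfolding half_block_diff_def by linarith
qed

lemma half_block_diff_constant:
  assumes "\<And>k. k \<in> {a..<a + 2 * h} \<Longrightarrow> v k = v a"
  shows "half_block_diff v a h = 0"
proof -
  have "(\<Sum>k\<in>{a..<a + h}. v k) = real h * v a" "(\<Sum>k\<in>{a + h..<a + 2 * h}. v k) = real h * v a"
    by (subst sum.cong[OF refl assms]; simp)+
  then show ?thesis
    unfolding half_block_diff_def by simp
qed

lemma two_power_diff_eq_double: "i < m \<Longrightarrow> (2::nat) ^ (m - i) = 2 * 2 ^ (m - i - 1)"
  by (cases "m - i") simp_all

lemma dyadic_block_end_le:
  assumes "i \<le> m" "j < 2 ^ i"
  shows "2 ^ (m - i) * j + 2 ^ (m - i) \<le> (2::nat) ^ m"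
proof -
  have "2 ^ (m - i) * (j + 1) \<le> 2 ^ (m - i) * (2::nat) ^ i"
    using assms(2) by (intro mult_le_mono2) simp
  then show ?thesis
    using assms(1) by (simp add: power_add[symmetric] algebra_simps)
qed

lemma haar_psi_weighted_inner:
  assumes "i < m" "j < 2 ^ i" "2 ^ m \<le> n"
  shows "2 powr (- real (m - i) / 2) * inner_n n (haar_psi m i j) v
           = half_block_diff v (2 ^ (m - i) * j) (2 ^ (m - i - 1)) / 2 ^ (m - i)"
proof -
  define a h c where "a = 2 ^ (m - i) * j" and "h = (2::nat) ^ (m - i - 1)"
    and "c = (2::real) powr (- real (m - i) / 2)"
  have s: "(2::nat) ^ (m - i) = 2 * h"
    unfolding h_def using assms(1) by (rule two_power_diff_eq_double)
  have psi: "haar_psi m i j k = (if k \<in> {a..<a + h} then c else if k \<in> {a + h..<a + 2 * h} then - c else 0)"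
    for k unfolding haar_psi_def s a_def h_def c_def by (simp add: mult.commute)
  have "a + 2 * h \<le> n"
    using dyadic_block_end_le[of i m j] assms unfolding a_def s by simp
  then have "inner_n n (haar_psi m i j) v = (\<Sum>k\<in>{a..<a + 2 * h}. haar_psi m i j k * v k)"
    unfolding inner_n_def by (intro sum.mono_neutral_right) (auto simp: psi)
  also have "\<dots> = (\<Sum>k\<in>{a..<a + h}. haar_psi m i j k * v k) + (\<Sum>k\<in>{a + h..<a + 2 * h}. haar_psi m i j k * v k)"
    by (rule sum.atLeastLessThan_concat[symmetric]) simp_all
  also have "\<dots> = (\<Sum>k\<in>{a..<a + h}. c * v k) + (\<Sum>k\<in>{a + h..<a + 2 * h}. - c * v k)"
    by (intro arg_cong2[where f = "(+)"] sum.cong) (simp_all add: psi)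
  also have "\<dots> = c * half_block_diff v a h"
    by (simp add: half_block_diff_def sum_distrib_left right_diff_distrib sum_negf)
  finally show ?thesis
    using powr_neg_half_times_self[of "m - i"]
    unfolding a_def h_def c_def by (simp add: mult.assoc[symmetric])
qed

lemma haar_psi_weighted_coeff_le_one:
  assumes "i < m" "j < 2 ^ i" "2 ^ m \<le> n" "\<And>k. k < n \<Longrightarrow> \<bar>v k\<bar> \<le> 1"
  shows "2 powr (- real (m - i) / 2) * \<bar>inner_n n (haar_psi m i j) v\<bar> \<le> 1"
proof -
  define a h where "a = 2 ^ (m - i) * j" and "h = (2::nat) ^ (m - i - 1)"
  have s: "(2::nat) ^ (m - i) = 2 * h"
    unfolding h_def using assms(1) by (rule two_power_diff_eq_double)
  have "a + 2 * h \<le> n"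
    using dyadic_block_end_le[of i m j] assms unfolding a_def s by simp
  then have bound: "\<bar>half_block_diff v a h\<bar> \<le> 2 * real h"
    by (intro abs_half_block_diff_le assms(4)) simp
  have "2 powr (- real (m - i) / 2) * \<bar>inner_n n (haar_psi m i j) v\<bar>
          = \<bar>2 powr (- real (m - i) / 2) * inner_n n (haar_psi m i j) v\<bar>"
    by (simp add: abs_mult)
  also have "\<dots> = \<bar>half_block_diff v a h\<bar> / 2 ^ (m - i)"
    unfolding haar_psi_weighted_inner[OF assms(1-3)] a_def h_def by simp
  also have "\<dots> \<le> 1"
    using bound arg_cong[OF s, of real] by (simp add: h_def)
  finally show ?thesis .
qed

lemma haar_psi_weighted_coeff_eq_zero:
  assumes "i < m" "j < 2 ^ i" "2 ^ m \<le> n"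
    and "\<And>k. 2 ^ (m - i) * j \<le> k \<Longrightarrow> k + 1 < 2 ^ (m - i) * j + 2 ^ (m - i) \<Longrightarrow> v (k + 1) = v k"
  shows "2 powr (- real (m - i) / 2) * \<bar>inner_n n (haar_psi m i j) v\<bar> = 0"
proof -
  define a h where "a = 2 ^ (m - i) * j" and "h = (2::nat) ^ (m - i - 1)"
  have s: "(2::nat) ^ (m - i) = 2 * h"
    unfolding h_def using assms(1) by (rule two_power_diff_eq_double)
  have "a \<le> k \<Longrightarrow> k + 1 < a + 2 * h \<Longrightarrow> v (k + 1) = v k" for k
    using assms(4) unfolding a_def s .
  then have "v k = v a" if "k \<in> {a..<a + 2 * h}" for k
    using that by (rule constant_without_sign_change)
  then have "half_block_diff v a h = 0"
    by (rule half_block_diff_constant)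
  then have "2 powr (- real (m - i) / 2) * inner_n n (haar_psi m i j) v = 0"
    unfolding haar_psi_weighted_inner[OF assms(1-3)] a_def h_def by simp
  then show ?thesis
    by simp
qed

text \<open>A block containing a sign change at \<open>k\<close> is the block \<open>k div 2^(m-i)\<close>, so the blocks carrying
  a nonzero coefficient are counted by the sign changes.\<close>

lemma haar_level_sum_le_sign_changes:
  assumes "i < m" "2 ^ m \<le> n" "\<And>k. k < n \<Longrightarrow> \<bar>v k\<bar> \<le> 1"
  shows "(\<Sum>j<2 ^ i. 2 powr (- real (m - i) / 2) * \<bar>inner_n n (haar_psi m i j) v\<bar>)
           \<le> real (sign_changes n v)"
proof -
  define s :: nat where "s = 2 ^ (m - i)"
  define S where "S = {k. k + 1 < n \<and> v (k + 1) \<noteq> v k}"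
  define J where "J = {j. j < 2 ^ i \<and> (\<exists>k. s * j \<le> k \<and> k + 1 < s * j + s \<and> v (k + 1) \<noteq> v k)}"
  have "finite S"
    unfolding S_def by (rule finite_subset[of _ "{..<n}"]) auto
  have "(\<Sum>j<2 ^ i. 2 powr (- real (m - i) / 2) * \<bar>inner_n n (haar_psi m i j) v\<bar>)
          \<le> (\<Sum>j<2 ^ i. if j \<in> J then 1 else 0)"
    using haar_psi_weighted_coeff_le_one[OF assms(1) _ assms(2,3)]
      haar_psi_weighted_coeff_eq_zero[OF assms(1) _ assms(2)]
    by (intro sum_mono) (auto simp: J_def s_def)
  also have "\<dots> = real (card J)"
    by (simp add: sum.If_cases J_def Int_def conj_commute)
  also have "card J \<le> card ((\<lambda>k. k div s) ` S)"
  proof (rule card_mono)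
    show "finite ((\<lambda>k. k div s) ` S)"
      using \<open>finite S\<close> by simp
    show "J \<subseteq> (\<lambda>k. k div s) ` S"
    proof
      fix j assume "j \<in> J"
      then obtain k where "j < 2 ^ i" "s * j \<le> k" "k + 1 < s * j + s" "v (k + 1) \<noteq> v k"
        unfolding J_def by auto
      moreover have "s * j + s \<le> n"
        using dyadic_block_end_le[of i m j] assms \<open>j < 2 ^ i\<close> unfolding s_def by simp
      moreover have "k div s = j"
        using \<open>s * j \<le> k\<close> \<open>k + 1 < s * j + s\<close> by (intro div_nat_eqI) auto
      ultimately show "j \<in> (\<lambda>k. k div s) ` S"
        unfolding S_def by force
    qed
  qed
  also have "\<dots> \<le> card S"
    by (rule card_image_le[OF \<open>finite S\<close>])
  finally show ?thesis
    unfolding sign_changes_def S_def by simp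
qed

lemma haar_father_weighted_coeff_le_one:
  assumes "n = 2 ^ m" "\<And>k. k < n \<Longrightarrow> \<bar>v k\<bar> \<le> 1"
  shows "2 powr (- real m / 2) * \<bar>inner_n n (haar_father m) v\<bar> \<le> 1"
proof -
  have mean: "2 powr (- real m / 2) * inner_n n (haar_father m) v = (\<Sum>k<n. v k) / n"
    using powr_neg_half_times_self[of m] assms(1)
    by (simp add: inner_n_def haar_father_def sum_distrib_left sum_divide_distrib mult.assoc[symmetric])
  have "2 powr (- real m / 2) * \<bar>inner_n n (haar_father m) v\<bar>
          = \<bar>2 powr (- real m / 2) * inner_n n (haar_father m) v\<bar>"
    by (simp add: abs_mult)
  also have "\<dots> = \<bar>\<Sum>k<n. v k\<bar> / n"
    unfolding mean by simp
  also have "\<dots> \<le> 1"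
    using abs_sum_le_card[of "{..<n}" v] assms by simp
  finally show ?thesis .
qed

lemma haar_mother_eq_haar_psi: "m \<ge> 1 \<Longrightarrow> haar_mother m = haar_psi m 0 0"
  by (cases m) (auto simp: haar_mother_def haar_psi_def)

theorem lemma6p6:
  fixes m n l :: nat and v :: "nat \<Rightarrow> real"
  assumes "m \<ge> 1" and "n = 2 ^ m"
    and "pm_one_vec n v"
    and "sign_changes n v \<le> l"
  shows "(2::real) powr (- real m / 2) * \<bar>inner_n n (haar_father m) v\<bar>
       + (2::real) powr (- real m / 2) * \<bar>inner_n n (haar_mother m) v\<bar>
       + (\<Sum>i\<in>{1..<m}. \<Sum>j<2^i. (2::real) powr (- real (m - i) / 2)
              * \<bar>inner_n n (haar_psi m i j) v\<bar>)
       \<le> real l * log 2 (real n) + 1"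
proof -
  define level where "level i = (\<Sum>j<2 ^ i. (2::real) powr (- real (m - i) / 2)
              * \<bar>inner_n n (haar_psi m i j) v\<bar>)" for i
  have v_bounded: "\<And>k. k < n \<Longrightarrow> \<bar>v k\<bar> \<le> 1"
    using assms(3) by (rule pm_one_vec_abs_le_one)
  have "2 powr (- real m / 2) * \<bar>inner_n n (haar_mother m) v\<bar> + (\<Sum>i\<in>{1..<m}. level i)
          = (\<Sum>i<m. level i)"
    using assms(1) by (simp add: haar_mother_eq_haar_psi level_def lessThan_atLeast0
        sum.atLeast_Suc_lessThan)
  also have "\<dots> \<le> (\<Sum>i<m. real l)"
    using haar_level_sum_le_sign_changes[of _ m n v] assms(2,4) v_bounded
    by (intro sum_mono) (fastforce simp: level_def)
  also have "\<dots> = real l * log 2 (real n)"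
    using assms(2) by simp
  finally show ?thesis
    using haar_father_weighted_coeff_le_one[where v = v, OF assms(2) v_bounded]
    unfolding level_def by linarith
qed

end
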